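(* There is an absolute constant $C$ such that for all integers $m\ge 2$, $n\ge2$ and every $X\in\{0,1\}^{n\times n}$, if $(a_0,\dots,a_{\phi(m)-1})$ is the representation of $\mathrm{Per}_{\zeta_m}(X)$, then $$\max_{0\le i\le\phi(m)-1}\log|a_i|\le C\,(m^2\log m+n\log n)$$ (with the convention $\log 0=-\infty$).
   Context: For $z\in\mathbb{C}$ with $|z|=1$ and $X\in\mathbb{C}^{n\times n}$, the $z$-permanent is $\mathrm{Per}_z(X)=\sum_{\sigma\in S_n} z^{\ell(\sigma)}\prod_{i=1}^n X_{i,\sigma(i)}$, where $\ell(\sigma)$ is the inversion number of $\sigma$. $\zeta_m$ is a primitive $m$-th root of unity and $\phi$ is Euler's totient function. The representation of $\alpha\in\mathbb{Z}[\zeta_m]$ is the unique tuple of integers $(a_0,\dots,a_{\phi(m)-1})$ with $\alpha=\sum_{i=0}^{\phi(m)-1}a_i\zeta_m^i$ (equivalently, the remainder upon dividing an integer polynomial representing $\alpha$ by the $m$-th cyclotomic polynomial $\Phi_m$). *)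

theory Defs
  imports "HOL-Analysis.Analysis" "HOL-Number_Theory.Number_Theory"
begin

definition inv_num :: "nat \<Rightarrow> (nat \<Rightarrow> nat) \<Rightarrow> nat" where
  "inv_num n \<sigma> = card {(i, j). i < j \<and> j < n \<and> \<sigma> j < \<sigma> i}"

definition zper :: "complex \<Rightarrow> nat \<Rightarrow> (nat \<Rightarrow> nat \<Rightarrow> complex) \<Rightarrow> complex" where
  "zper z n X = (\<Sum>\<sigma> | \<sigma> permutes {..<n}. z ^ inv_num n \<sigma> * (\<Prod>i<n. X i (\<sigma> i)))"

definition primitive_root_unity :: "nat \<Rightarrow> complex \<Rightarrow> bool" where
  "primitive_root_unity m \<zeta> \<longleftrightarrow> \<zeta> ^ m = 1 \<and> (\<forall>k. 0 < k \<and> k < m \<longrightarrow> \<zeta> ^ k \<noteq> 1)"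

end

theory Submission
  imports Defs "Berlekamp_Zassenhaus.Factor_Bound"
begin

text \<open>
  Since \<open>\<zeta>\<^sup>m = 1\<close>, reducing the inversion numbers modulo \<open>m\<close> writes \<open>Per\<^sub>\<zeta>(X)\<close> as
  \<open>h(\<zeta>)\<close> for an integer polynomial \<open>h\<close> of degree \<open>< m\<close> with coefficients bounded by \<open>n!\<close>.
  The primitive minimal polynomial \<open>f\<close> of \<open>\<zeta>\<close> over \<open>\<int>\<close> divides \<open>x\<^sup>m - 1\<close>, so its
  leading coefficient is \<open>\<plusminus>1\<close> and, by Mignotte's bound, its coefficients are at most \<open>4\<^sup>m\<close>;
  dividing \<open>h\<close> by \<open>f\<close> leaves a remainder with coefficients at most \<open>n! (1 + 4\<^sup>m)\<^sup>m\<close>.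
  Every \<open>\<zeta>\<^sup>k\<close> with \<open>k\<close> coprime to \<open>m\<close> is a root of \<open>f\<close> (the classical Frobenius
  argument), so \<open>deg f \<ge> \<phi>(m)\<close>. Hence the remainder is the representation of
  \<open>Per\<^sub>\<zeta>(X)\<close>, and taking logarithms gives the bound with \<open>C = 3\<close>.
\<close>

hide_const (open) up_ring.coeff up_ring.monom Module.smult comm_monoid_mult_class.coprime

abbreviation ipoly :: "int poly \<Rightarrow> 'a :: comm_ring_1 \<Rightarrow> 'a" where
  "ipoly f x \<equiv> poly (of_int_poly f) x"

section \<open>Congruences modulo a prime\<close>

lemma int_prime_dvd_power_minus_self:
  fixes c :: int
  assumes p: "prime p"
  shows "int p dvd c ^ p - c"
proof (cases "int p dvd c")
  case True
  moreover have "c dvd c ^ p"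
    using p prime_gt_0_nat by (simp add: dvd_power)
  ultimately show ?thesis
    by (meson dvd_diff dvd_trans)
next
  case False
  define a where "a = nat (c mod int p)"
  have ca: "[c = int a] (mod int p)"
    using p prime_gt_0_nat by (simp add: a_def cong_def)
  have "\<not> p dvd a"
    using False ca by (simp add: cong_dvd_iff flip: of_nat_dvd_iff)
  then have "[a ^ (p - 1) * a = 1 * a] (mod p)"
    using fermat_theorem[OF p] cong_scalar_right by blast
  then have "[a ^ p = a] (mod p)"
    using p prime_gt_0_nat by (simp add: power_eq_if mult.commute)
  then have "[int a ^ p = int a] (mod int p)"
    using cong_int_iff by force
  then have "[c ^ p = c] (mod int p)"
    using ca by (meson cong_pow cong_sym cong_trans)
  then show ?thesis
    by (simp add: cong_iff_dvd_diff)
qed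

lemma prime_dvd_power_add_minus_powers:
  fixes a b :: "'a :: comm_ring_1"
  assumes p: "prime p"
  shows "of_nat p dvd (a + b) ^ p - a ^ p - b ^ p"
proof -
  let ?t = "\<lambda>k. of_nat (p choose k) * a ^ k * b ^ (p - k)"
  have p0: "p \<noteq> 0"
    using p by auto
  have split: "{..p} = {0, p} \<union> {1..<p}" and disjoint: "{0, p} \<inter> {1..<p} = {}"
    by auto
  have "(a + b) ^ p = (\<Sum>k\<in>{0, p}. ?t k) + (\<Sum>k\<in>{1..<p}. ?t k)"
    unfolding binomial_ring split by (rule sum.union_disjoint) (use disjoint in auto)
  then have eq: "(a + b) ^ p - a ^ p - b ^ p = (\<Sum>k\<in>{1..<p}. ?t k)"
    using p0 by (simp add: algebra_simps)
  have "of_nat p dvd ?t k" if "k \<in> {1..<p}" for k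
  proof -
    have "p dvd p choose k"
      using that p by (intro dvd_choose_prime) auto
    then obtain c where "p choose k = p * c" ..
    then have "?t k = of_nat p * (of_nat c * a ^ k * b ^ (p - k))"
      by (simp only: of_nat_mult mult.assoc)
    then show ?thesis
      by simp
  qed
  then show ?thesis
    unfolding eq by (rule dvd_sum)
qed

lemma prime_dvd_pcompose_monom_minus_power:
  fixes g :: "int poly"
  assumes p: "prime p"
  shows "[:int p:] dvd g \<circ>\<^sub>p monom 1 p - g ^ p"
proof (induction g)
  case 0
  then show ?case
    using p prime_gt_0_nat by (simp add: power_0_left)
next
  case (pCons c g)
  have "pCons 0 g = [:0, 1:] * g"
    by simp
  then have xp: "pCons 0 g ^ p = monom 1 p * g ^ p"
    by (simp only: power_mult_distrib monom_altdef smult_1_left)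
  have "[:int p:] dvd (pCons c g) ^ p - [:c:] ^ p - pCons 0 g ^ p"
    using prime_dvd_power_add_minus_powers[OF p, of "[:c:]" "pCons 0 g"]
    by (simp add: of_nat_poly)
  moreover obtain e where "c ^ p - c = int p * e"
    using int_prime_dvd_power_minus_self[OF p, of c] by blast
  then have "[:c:] ^ p - [:c:] = [:int p:] * [:e:]"
    by (simp add: poly_const_pow)
  moreover have "pCons c g \<circ>\<^sub>p monom 1 p - (pCons c g) ^ p =
     monom 1 p * (g \<circ>\<^sub>p monom 1 p - g ^ p) - ([:c:] ^ p - [:c:])
     - ((pCons c g) ^ p - [:c:] ^ p - pCons 0 g ^ p)"
    by (simp add: pcompose_pCons xp algebra_simps)
  ultimately show ?case
    using pCons.IH by (metis dvd_diff dvd_mult dvd_triv_left)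
qed

lemma dvd_coeff_mult_minus_lead_coeff:
  fixes f W :: "'a :: comm_ring_1 poly"
  assumes above: "\<And>i. i > j \<Longrightarrow> p dvd coeff W i"
  shows "p dvd coeff (f * W) (degree f + j) - lead_coeff f * coeff W j"
proof -
  define d where "d = degree f"
  let ?t = "\<lambda>i. coeff f i * coeff W (d + j - i)"
  have "coeff (f * W) (d + j) = ?t d + (\<Sum>i\<in>{..d+j} - {d}. ?t i)"
    unfolding coeff_mult by (rule sum.remove) auto
  then have eq: "coeff (f * W) (degree f + j) - lead_coeff f * coeff W j = (\<Sum>i\<in>{..d+j} - {d}. ?t i)"
    by (simp add: d_def)
  have "p dvd (\<Sum>i\<in>{..d+j} - {d}. ?t i)"
  proof (rule dvd_sum)
    fix i assume i: "i \<in> {..d+j} - {d}"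
    show "p dvd ?t i"
    proof (cases "i < d")
      case True
      then show ?thesis
        using above[of "d + j - i"] by simp
    next
      case False
      then have "coeff f i = 0"
        using i by (simp add: d_def coeff_eq_0)
      then show ?thesis
        by simp
    qed
  qed
  then show ?thesis
    unfolding eq .
qed

lemma dvd_const_if_congruent_multiple:
  fixes f W :: "int poly" and p c :: int
  assumes lc: "\<bar>lead_coeff f\<bar> = 1" and deg: "degree f \<ge> 1"
    and cong: "[:p:] dvd [:c:] - f * W"
  shows "p dvd c"
proof -
  obtain K where K: "[:c:] - f * W = [:p:] * K"
    using cong by blast
  have coeff_fW: "coeff (f * W) i = (if i = 0 then c else 0) - p * coeff K i" for i
    using arg_cong[OF K, of "\<lambda>P. coeff P i"] by (cases i) auto
  have "p dvd coeff W j" for j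
  proof (rule ccontr)
    define J where "J = {i. \<not> p dvd coeff W i}"
    define k where "k = Max J"
    assume "\<not> p dvd coeff W j"
    then have "j \<in> J"
      by (simp add: J_def)
    have "finite J"
      by (rule finite_subset[of _ "{..degree W}"]) (auto simp: J_def intro: le_degree)
    then have "k \<in> J"
      unfolding k_def by (rule Max_in) (use \<open>j \<in> J\<close> in blast)
    have "p dvd coeff W i" if "i > k" for i
    proof (rule ccontr)
      assume "\<not> p dvd coeff W i"
      then have "i \<le> k"
        using Max_ge[OF \<open>finite J\<close>, of i] by (simp add: J_def k_def)
      then show False
        using that by simp
    qed
    then have lower: "p dvd coeff (f * W) (degree f + k) - lead_coeff f * coeff W k"
      by (rule dvd_coeff_mult_minus_lead_coeff)
    have top: "p dvd coeff (f * W) (degree f + k)"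
      using coeff_fW deg by simp
    have "p dvd lead_coeff f * coeff W k"
      using dvd_diff[OF top lower] by simp
    moreover have "lead_coeff f = 1 \<or> lead_coeff f = -1"
      using lc by linarith
    ultimately have "p dvd coeff W k"
      by auto
    then show False
      using \<open>k \<in> J\<close> by (simp add: J_def)
  qed
  then have "p dvd coeff (f * W) 0"
    by (simp add: coeff_mult)
  then show "p dvd c"
    using coeff_fW[of 0] by (simp add: dvd_diff_left_iff)
qed

lemma dvd_power_minus_power:
  fixes x y :: "'a :: comm_ring_1"
  shows "x - y dvd x ^ n - y ^ n"
  by (metis dvd_triv_left power_diff_sumr2)

lemma prime_dvd_power_if_bezout:
  fixes f g U T :: "int poly"
  assumes p: "prime p" and lc: "\<bar>lead_coeff f\<bar> = 1" and deg: "degree f \<ge> 1"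
    and bezout: "[:c:] = f * U + g * T" and root: "f dvd g \<circ>\<^sub>p monom 1 p"
  shows "int p dvd c ^ p"
proof -
  obtain W where W: "g \<circ>\<^sub>p monom 1 p = f * W"
    using root ..
  obtain K where K: "g \<circ>\<^sub>p monom 1 p - g ^ p = [:int p:] * K"
    using prime_dvd_pcompose_monom_minus_power[OF p] ..
  have "f * U dvd [:c:] ^ p - (g * T) ^ p"
    using dvd_power_minus_power[of "[:c:]" "g * T" p] bezout by simp
  then obtain V where V: "[:c:] ^ p - (g * T) ^ p = f * V"
    by (metis dvd_mult_left dvdE)
  have frobenius: "g ^ p - f * W = - ([:int p:] * K)"
    using K W by (metis minus_diff_eq)
  \<comment> \<open>Modulo \<open>f\<close> and \<open>p\<close>: \<open>c\<^sup>p \<equiv> (g T)\<^sup>p \<equiv> g(x\<^sup>p) T\<^sup>p \<equiv> 0\<close>.\<close>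
  have "[:c ^ p:] - f * (V + W * T ^ p)
      = ([:c:] ^ p - (g * T) ^ p - f * V) + (g ^ p - f * W) * T ^ p"
    by (simp add: algebra_simps power_mult_distrib poly_const_pow)
  also have "\<dots> = [:int p:] * (- K * T ^ p)"
    using V frobenius by simp
  finally have "[:int p:] dvd [:c ^ p:] - f * (V + W * T ^ p)"
    by (metis dvd_triv_left)
  then show ?thesis
    by (rule dvd_const_if_congruent_multiple[OF lc deg])
qed

section \<open>Minimal polynomials over the integers\<close>

text \<open>Content \<open>1\<close> makes the minimal polynomial primitive, so by Gauss's lemma it divides
  every integer polynomial vanishing at \<open>x\<close>.\<close>

definition is_int_minpoly :: "'a :: {idom, ring_char_0} \<Rightarrow> int poly \<Rightarrow> bool" where
  "is_int_minpoly x f \<longleftrightarrow> f \<noteq> 0 \<and> content f = 1 \<and> ipoly f x = 0 \<and>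
     (\<forall>g. g \<noteq> 0 \<longrightarrow> ipoly g x = 0 \<longrightarrow> degree f \<le> degree g)"

lemma degree_0_ipoly_eq_0:
  fixes x :: "'a :: {comm_ring_1, ring_char_0}"
  assumes "degree g = 0" and "ipoly g x = 0"
  shows "g = 0"
proof -
  obtain c where g: "g = [:c:]"
    using assms(1) degree_eq_zeroE by blast
  then have "of_int c = (0 :: 'a)"
    using assms(2) by (simp add: hom_distribs)
  then show ?thesis
    using g by simp
qed

lemma int_minpoly_exists:
  assumes "g \<noteq> 0" and "ipoly g x = 0"
  shows "\<exists>f. is_int_minpoly x f"
proof -
  let ?S = "{g. g \<noteq> 0 \<and> ipoly g x = 0}"
  obtain g0 where g0: "g0 \<in> ?S" and least: "\<And>g. g \<in> ?S \<Longrightarrow> degree g0 \<le> degree g"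
    using assms ex_has_least_nat[of "\<lambda>g. g \<in> ?S" g degree] by blast
  have "content g0 \<noteq> 0"
    using g0 by simp
  moreover have "ipoly g0 x = of_int (content g0) * ipoly (primitive_part g0) x"
    by (metis content_times_primitive_part of_int_hom.map_poly_hom_smult poly_smult)
  ultimately have "ipoly (primitive_part g0) x = 0"
    using g0 by simp
  then have "is_int_minpoly x (primitive_part g0)"
    using g0 least by (auto simp: is_int_minpoly_def)
  then show ?thesis ..
qed

lemma int_minpoly_dvd:
  assumes f: "is_int_minpoly x f" and g: "ipoly g x = 0"
  shows "f dvd g"
proof -
  have f0: "f \<noteq> 0" and content: "content f = 1" and fx: "ipoly f x = 0"
    using f by (auto simp: is_int_minpoly_def)
  obtain a q where a: "a \<noteq> 0" and div: "smult a g = f * q + pseudo_mod g f"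
    using pseudo_mod[OF f0, of g] by blast
  have "ipoly (pseudo_mod g f) x = 0"
    using arg_cong[OF div, of "\<lambda>h. ipoly h x"] g fx by (simp add: hom_distribs)
  then have "pseudo_mod g f = 0"
    using f pseudo_mod(2)[OF f0, of g] by (force simp: is_int_minpoly_def)
  then have "f dvd smult a g"
    using div by simp
  then show ?thesis
    using dvd_smult_int[OF a] primitive_part_prim[OF content] by metis
qed

lemma int_minpoly_degree_pos:
  assumes "is_int_minpoly x f"
  shows "degree f \<ge> 1"
proof (rule ccontr)
  assume "\<not> degree f \<ge> 1"
  then have "degree f = 0"
    by simp
  moreover have "ipoly f x = 0"
    using assms by (simp add: is_int_minpoly_def)
  ultimately have "f = 0"
    by (rule degree_0_ipoly_eq_0)
  then show False
    using assms by (simp add: is_int_minpoly_def)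
qed

lemma int_minpoly_eval_eq_0_sym:
  assumes f: "is_int_minpoly x f" and g: "is_int_minpoly y g" and gx: "ipoly g x = 0"
  shows "ipoly f y = 0"
proof (rule ccontr)
  assume fy: "ipoly f y \<noteq> 0"
  obtain c where c: "g = f * c"
    using int_minpoly_dvd[OF f gx] ..
  have "c \<noteq> 0"
    using c g by (auto simp: is_int_minpoly_def)
  moreover have "ipoly c y = 0"
    using c g fy by (simp add: is_int_minpoly_def hom_distribs)
  ultimately have "degree g \<le> degree c"
    using g by (simp add: is_int_minpoly_def)
  moreover have "degree g = degree f + degree c"
    using c \<open>c \<noteq> 0\<close> f by (simp add: degree_mult_eq is_int_minpoly_def)
  ultimately show False
    using int_minpoly_degree_pos[OF f] by simp
qed

lemma is_int_minpoly_if_root: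
  assumes f: "is_int_minpoly x f" and fy: "ipoly f y = 0"
  shows "is_int_minpoly y f"
proof -
  have "f \<noteq> 0"
    using f by (simp add: is_int_minpoly_def)
  then obtain g where g: "is_int_minpoly y g"
    using int_minpoly_exists fy by blast
  have "ipoly g x = 0"
    using int_minpoly_eval_eq_0_sym[OF g f] fy f by (auto simp: is_int_minpoly_def)
  then have "degree f \<le> degree g"
    using f g by (simp add: is_int_minpoly_def)
  moreover have "degree g \<le> degree h" if "h \<noteq> 0" and "ipoly h y = 0" for h
    using g that by (simp add: is_int_minpoly_def)
  ultimately have "degree f \<le> degree h" if "h \<noteq> 0" and "ipoly h y = 0" for h
    using that by (meson order_trans)
  then show ?thesis
    using f fy by (simp add: is_int_minpoly_def)
qed

lemma int_minpoly_mult_dvd: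
  assumes f: "is_int_minpoly x f" and g: "is_int_minpoly y g" and gx: "ipoly g x \<noteq> 0"
    and "g dvd h" and "ipoly h x = 0"
  shows "f * g dvd h"
proof -
  obtain q where q: "h = g * q"
    using \<open>g dvd h\<close> ..
  have "ipoly q x = 0"
    using q gx \<open>ipoly h x = 0\<close> by (simp add: hom_distribs)
  then show ?thesis
    using int_minpoly_dvd[OF f] q by (simp add: mult.commute mult_dvd_mono)
qed

lemma int_minpoly_eval_inj:
  assumes f: "is_int_minpoly x f" and "degree r < degree f" and "degree s < degree f"
    and "ipoly r x = ipoly s x"
  shows "r = s"
proof (rule ccontr)
  assume "r \<noteq> s"
  moreover have "ipoly (r - s) x = 0"
    using assms(4) by (simp add: hom_distribs)
  ultimately have "degree f \<le> degree (r - s)"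
    using f by (simp add: is_int_minpoly_def)
  moreover have "degree (r - s) < degree f"
    using assms(2,3) by (metis degree_diff_le_max le_less_trans max_less_iff_conj)
  ultimately show False
    by simp
qed

lemma int_minpoly_ipoly_eq_if_dvd_diff:
  assumes f: "is_int_minpoly x f" and "f dvd g - h"
  shows "ipoly g x = ipoly h x"
proof -
  obtain q where "g - h = f * q"
    using \<open>f dvd g - h\<close> ..
  then have "ipoly (g - h) x = ipoly (f * q) x"
    by simp
  then show ?thesis
    using f by (simp add: is_int_minpoly_def hom_distribs)
qed

lemma int_minpoly_coeff_eq_representation:
  assumes f: "is_int_minpoly x f" and "k \<le> degree f" and r: "degree r < degree f"
    and rep: "ipoly r x = (\<Sum>j<k. of_int (a j) * x ^ j)" and "i < k"
  shows "coeff r i = a i"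
proof -
  define A where "A = (\<Sum>j<k. monom (a j) j)"
  have coeff_A: "coeff A j = (if j < k then a j else 0)" for j
    by (simp add: A_def coeff_sum coeff_monom)
  then have "degree A \<le> degree f - 1"
    using \<open>k \<le> degree f\<close> by (intro degree_le) auto
  then have "degree A < degree f"
    using int_minpoly_degree_pos[OF f] by linarith
  moreover have "ipoly r x = ipoly A x"
    using rep by (simp add: A_def hom_distribs poly_sum poly_monom)
  ultimately have "r = A"
    using int_minpoly_eval_inj[OF f r] by simp
  then show ?thesis
    using coeff_A[of i] \<open>i < k\<close> by simp
qed

section \<open>The polynomial \<open>x\<^sup>m - 1\<close>\<close>

definition root_unity_poly :: "nat \<Rightarrow> int poly" where
  "root_unity_poly m = monom 1 m - 1"

lemma ipoly_root_unity_poly [simp]: "ipoly (root_unity_poly m) x = x ^ m - 1"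
  by (simp add: root_unity_poly_def hom_distribs poly_monom)

lemma coeff_root_unity_poly:
  "coeff (root_unity_poly m) i = (if i = m then 1 else 0) - (if i = 0 then 1 else 0)"
  by (simp add: root_unity_poly_def coeff_monom)

lemma degree_root_unity_poly:
  assumes "m > 0"
  shows "degree (root_unity_poly m) = m" and "lead_coeff (root_unity_poly m) = 1"
proof -
  have "degree (root_unity_poly m) \<le> m"
    by (rule degree_le) (auto simp: coeff_root_unity_poly)
  moreover have "m \<le> degree (root_unity_poly m)"
    using assms by (intro le_degree) (simp add: coeff_root_unity_poly)
  ultimately show "degree (root_unity_poly m) = m"
    by simp
  then show "lead_coeff (root_unity_poly m) = 1"
    using assms by (simp add: coeff_root_unity_poly)
qed

lemma root_unity_poly_nonzero:
  assumes "m > 0"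
  shows "root_unity_poly m \<noteq> 0"
  using degree_root_unity_poly(2)[OF assms] by auto

lemma dvd_root_unity_poly_lead_coeff:
  assumes "f dvd root_unity_poly m" and "m > 0"
  shows "\<bar>lead_coeff f\<bar> = 1"
proof -
  obtain g where "root_unity_poly m = f * g"
    using assms(1) ..
  then have "lead_coeff f * lead_coeff g = 1"
    using degree_root_unity_poly[OF assms(2)] by (metis lead_coeff_mult)
  then show ?thesis
    unfolding zmult_eq_1_iff by auto
qed

lemma mahler_measure_root_unity_poly:
  assumes "m > 0"
  shows "mahler_measure (root_unity_poly m) \<le> 2 ^ m"
proof -
  let ?F = "root_unity_poly m"
  have F0: "?F \<noteq> 0"
    using root_unity_poly_nonzero[OF assms] .
  have "(\<Sum>a\<leftarrow>coeffs ?F. real_of_int (a * a)) \<le> (\<Sum>a\<leftarrow>coeffs ?F. 1)"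
  proof (rule sum_list_mono)
    fix a assume "a \<in> set (coeffs ?F)"
    then obtain i where "i < length (coeffs ?F)" and "a = coeffs ?F ! i"
      by (metis in_set_conv_nth)
    then have "a = coeff ?F i"
      using F0 coeffs_nth[OF F0, of i] by (simp add: length_coeffs less_Suc_eq_le)
    then show "real_of_int (a * a) \<le> 1"
      by (auto simp: coeff_root_unity_poly)
  qed
  also have "\<dots> = real m + 1"
    using F0 degree_root_unity_poly(1)[OF assms] by (simp add: sum_list_triv length_coeffs)
  also have "\<dots> \<le> (2 ^ m) ^ 2"
  proof -
    have "m + 1 \<le> (2::nat) ^ m"
      using less_exp[of m] by linarith
    then have "real (m + 1) \<le> real ((2::nat) ^ m)"
      by (simp only: of_nat_le_iff)
    then have "real m + 1 \<le> 2 ^ m"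
      by simp
    also have "(2::real) ^ m \<le> (2 ^ m) ^ 2"
      by (simp add: power2_eq_square)
    finally show ?thesis .
  qed
  finally have "sqrt (\<Sum>a\<leftarrow>coeffs ?F. real_of_int (a * a)) \<le> 2 ^ m"
    by (intro real_le_lsqrt) auto
  moreover have "mahler_measure ?F \<le> sqrt (\<Sum>a\<leftarrow>coeffs ?F. real_of_int (a * a))"
    using Landau_inequality_mahler_measure[of ?F] by (simp add: of_int_hom.hom_sum_list o_def)
  ultimately show ?thesis
    by linarith
qed

lemma dvd_root_unity_poly_coeff_bound:
  assumes "f dvd root_unity_poly m" and "m > 0"
  shows "\<bar>coeff f k\<bar> \<le> 4 ^ m"
proof -
  have degree: "degree f \<le> m"
    using dvd_imp_degree_le[OF assms(1) root_unity_poly_nonzero[OF assms(2)]]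
    by (simp add: degree_root_unity_poly(1)[OF assms(2)])
  have mahler: "mahler_measure f \<le> 2 ^ m"
    using mahler_measure_dvd[OF root_unity_poly_nonzero[OF assms(2)] assms(1)]
      mahler_measure_root_unity_poly[OF assms(2)] by linarith
  have "degree f choose k \<le> 2 ^ degree f"
    by (rule binomial_le_pow2)
  also have "(2::nat) ^ degree f \<le> 2 ^ m"
    using degree by (simp add: power_increasing)
  finally have "real (degree f choose k) \<le> real ((2::nat) ^ m)"
    by (simp only: of_nat_le_iff)
  then have binomial: "real (degree f choose k) \<le> 2 ^ m"
    by simp
  have "real_of_int \<bar>coeff f k\<bar> \<le> real (degree f choose k) * mahler_measure f"
    by (rule Mignotte_bound)
  also have "\<dots> \<le> 2 ^ m * 2 ^ m"
    using binomial mahler mahler_measure_ge_0[of f] by (intro mult_mono) auto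
  also have "(2::real) ^ m * 2 ^ m = 4 ^ m"
    by (simp flip: power_mult_distrib)
  finally have "real_of_int \<bar>coeff f k\<bar> \<le> real_of_int (4 ^ m)"
    by simp
  then show ?thesis
    by (simp only: of_int_le_iff)
qed

lemma root_unity_poly_bezout:
  assumes "m > 0" and "root_unity_poly m = f * g * h"
  shows "\<exists>U T. [:int m:] = f * U + g * T"
proof -
  define G where "G = g * h"
  have F: "root_unity_poly m = f * G"
    using assms(2) by (simp add: G_def mult.assoc)
  have "pderiv (root_unity_poly m) = monom (int m) (m - 1)"
    by (simp add: root_unity_poly_def pderiv_diff pderiv_monom)
  then have "[:int m:] = monom 1 1 * pderiv (root_unity_poly m) - smult (int m) (root_unity_poly m)"
    using assms(1) by (simp add: root_unity_poly_def smult_diff_right mult_monom monom_0 smult_monom)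
  also have "\<dots> = f * (monom 1 1 * pderiv G - smult (int m) G) + g * (monom 1 1 * h * pderiv f)"
    unfolding F pderiv_mult by (simp add: G_def algebra_simps)
  finally show ?thesis
    by blast
qed

section \<open>Primitive roots of unity\<close>

lemma power_mod_eq_of_power_eq_1:
  fixes x :: "'a :: monoid_mult"
  assumes "x ^ m = 1"
  shows "x ^ (t mod m) = x ^ t"
proof -
  have "x ^ t = x ^ (m * (t div m) + t mod m)"
    by simp
  also have "\<dots> = (x ^ m) ^ (t div m) * x ^ (t mod m)"
    by (simp only: power_add power_mult)
  finally show ?thesis
    using assms by simp
qed

lemma primitive_root_unity_power_eq_1_iff:
  assumes z: "primitive_root_unity m z" and "m > 0"
  shows "z ^ t = 1 \<longleftrightarrow> m dvd t"
proof -
  have zm: "z ^ m = 1"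
    using z by (simp add: primitive_root_unity_def)
  show ?thesis
  proof
    assume "z ^ t = 1"
    then have "z ^ (t mod m) = 1"
      using power_mod_eq_of_power_eq_1[OF zm, of t] by simp
    moreover have "t mod m < m"
      using \<open>m > 0\<close> by simp
    ultimately have "t mod m = 0"
      using z unfolding primitive_root_unity_def by (metis neq0_conv)
    then show "m dvd t"
      by (simp add: mod_eq_0_iff_dvd)
  next
    assume "m dvd t"
    then obtain k where "t = m * k" ..
    then show "z ^ t = 1"
      using zm by (simp add: power_mult)
  qed
qed

lemma primitive_root_unity_power_coprime:
  assumes z: "primitive_root_unity m z" and "m > 0" and "coprime k m"
  shows "primitive_root_unity m (z ^ k)"
  unfolding primitive_root_unity_def
proof (intro conjI allI impI)
  show "(z ^ k) ^ m = 1"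
    using primitive_root_unity_power_eq_1_iff[OF assms(1,2)] by (simp flip: power_mult)
  fix j assume j: "0 < j \<and> j < m"
  have "\<not> m dvd k * j"
  proof
    assume "m dvd k * j"
    then have "m dvd j"
      using coprime_dvd_mult_right_iff[of m k j] \<open>coprime k m\<close>
      by (simp add: algebraic_semidom_class.coprime_commute)
    then show False
      using j by (auto dest: dvd_imp_le)
  qed
  then show "(z ^ k) ^ j \<noteq> 1"
    using primitive_root_unity_power_eq_1_iff[OF assms(1,2)] by (simp flip: power_mult)
qed

lemma primitive_root_unity_inj_on_powers:
  assumes z: "primitive_root_unity m z" and "m > 0"
  shows "inj_on (\<lambda>k. z ^ k) {..<m}"
proof -
  have z0: "z \<noteq> 0"
    using z \<open>m > 0\<close> by (auto simp: primitive_root_unity_def power_0_left)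
  have "i = j" if "i < j" and "j < m" and "z ^ i = z ^ j" for i j
  proof -
    have "z ^ j = z ^ i * z ^ (j - i)"
      using that(1) by (simp flip: power_add)
    then have "z ^ (j - i) = 1"
      using that(3) z0 by simp
    then have "m dvd j - i"
      using primitive_root_unity_power_eq_1_iff[OF assms] by simp
    then show ?thesis
      using that by (auto dest: dvd_imp_le)
  qed
  then show ?thesis
    by (metis inj_onI lessThan_iff linorder_neqE_nat)
qed

text \<open>Otherwise \<open>f\<close> and the minimal polynomial \<open>g\<close> of \<open>z\<^sup>p\<close> are distinct factors of
  \<open>x\<^sup>m - 1\<close>, whose derivative shows that it is squarefree modulo \<open>p\<close>; but \<open>f\<close> divides
  \<open>g(x\<^sup>p) \<equiv> g\<^sup>p\<close>.\<close>

lemma int_minpoly_primitive_root_power_prime: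
  assumes z: "primitive_root_unity m z" and m: "m > 0" and f: "is_int_minpoly z f"
    and p: "prime p" and "\<not> p dvd m"
  shows "ipoly f (z ^ p) = 0"
proof (rule ccontr)
  assume fzp: "ipoly f (z ^ p) \<noteq> 0"
  have zm: "z ^ m = 1" and zpm: "(z ^ p) ^ m = 1"
    using z by (simp_all add: primitive_root_unity_def) (metis mult.commute power_mult power_one)
  obtain g where g: "is_int_minpoly (z ^ p) g"
    using int_minpoly_exists[OF root_unity_poly_nonzero[OF m]] zpm by auto
  have "ipoly g z \<noteq> 0"
    using int_minpoly_eval_eq_0_sym[OF f g] fzp by blast
  then have fg: "f * g dvd root_unity_poly m"
    using int_minpoly_mult_dvd[OF f g] int_minpoly_dvd[OF g] zm zpm by simp
  then obtain U T where bezout: "[:int m:] = f * U + g * T"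
    using root_unity_poly_bezout[OF m] by (metis dvdE)
  have "ipoly (g \<circ>\<^sub>p monom 1 p) z = 0"
    using g by (simp add: is_int_minpoly_def hom_distribs poly_pcompose poly_monom)
  then have "f dvd g \<circ>\<^sub>p monom 1 p"
    by (rule int_minpoly_dvd[OF f])
  moreover have "\<bar>lead_coeff f\<bar> = 1"
    using dvd_root_unity_poly_lead_coeff[OF dvd_trans[OF dvd_triv_left fg] m] .
  ultimately have "int p dvd int m ^ p"
    using prime_dvd_power_if_bezout[OF p _ int_minpoly_degree_pos[OF f] bezout] by blast
  then have "p dvd m ^ p"
    by (simp only: int_dvd_int_iff flip: semiring_1_class.of_nat_power)
  then show False
    using prime_dvd_power[OF p] \<open>\<not> p dvd m\<close> by blast
qed

lemma int_minpoly_primitive_root_power_coprime: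
  assumes z: "primitive_root_unity m z" and m: "m > 1" and f: "is_int_minpoly z f"
    and "coprime k m"
  shows "is_int_minpoly (z ^ k) f"
  using \<open>coprime k m\<close>
proof (induction k rule: less_induct)
  case (less k)
  show ?case
  proof (cases "k \<le> 1")
    case True
    moreover have "k \<noteq> 0"
    proof
      assume "k = 0"
      then have "is_unit m"
        using less.prems by (simp only: coprime_0_left_iff)
      then show False
        using m by simp
    qed
    ultimately show ?thesis
      using f by (simp add: le_Suc_eq)
  next
    case False
    then obtain p where p: "prime p" "p dvd k"
      using prime_factor_nat[of k] by auto
    obtain k' where k: "k = p * k'"
      using p(2) by (rule dvdE)
    have "k' < k"
      using False k prime_gt_1_nat[OF p(1)] by (cases "k' = 0") auto
    have coprime: "coprime k' m"
      using less.prems k by simp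
    have "\<not> p dvd m"
      using coprime_common_divisor[OF less.prems p(2)] not_prime_unit[of p] p(1) by blast
    have IH: "is_int_minpoly (z ^ k') f"
      using less.IH[OF \<open>k' < k\<close> coprime] .
    have "ipoly f ((z ^ k') ^ p) = 0"
      using int_minpoly_primitive_root_power_prime[OF
          primitive_root_unity_power_coprime[OF z _ coprime] _ IH p(1) \<open>\<not> p dvd m\<close>] m
      by simp
    then have "ipoly f (z ^ k) = 0"
      using k by (simp add: power_mult mult.commute)
    then show ?thesis
      by (rule is_int_minpoly_if_root[OF IH])
  qed
qed

lemma int_minpoly_primitive_root_degree:
  assumes z: "primitive_root_unity m z" and m: "m > 1" and f: "is_int_minpoly z f"
  shows "totient m \<le> degree f"
proof -
  let ?f = "of_int_poly f :: complex poly"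
  have f0: "?f \<noteq> 0"
    using f by (simp add: is_int_minpoly_def)
  have "coprime k m \<Longrightarrow> poly ?f (z ^ k) = 0" for k
    using int_minpoly_primitive_root_power_coprime[OF z m f] by (simp add: is_int_minpoly_def)
  then have roots: "(\<lambda>k. z ^ k) ` totatives m \<subseteq> {x. poly ?f x = 0}"
    by (auto simp: totatives_def)
  have "totatives m \<subseteq> {..<m}"
    using totatives_less m by blast
  moreover have "inj_on (\<lambda>k. z ^ k) {..<m}"
    using primitive_root_unity_inj_on_powers[OF z] m by simp
  ultimately have "inj_on (\<lambda>k. z ^ k) (totatives m)"
    using inj_on_subset by blast
  then have "totient m = card ((\<lambda>k. z ^ k) ` totatives m)"
    by (simp add: totient_def card_image)
  also have "\<dots> \<le> card {x. poly ?f x = 0}"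
    by (rule card_mono[OF poly_roots_finite[OF f0] roots])
  also have "\<dots> \<le> degree f"
    using card_poly_roots_bound[OF f0] by simp
  finally show ?thesis .
qed

section \<open>Bounding the representation\<close>

lemma bounded_remainder_step:
  fixes f h :: "int poly"
  assumes lc: "\<bar>lead_coeff f\<bar> = 1" and deg: "degree f \<ge> 1" and B: "\<And>i. \<bar>coeff f i\<bar> \<le> B"
    and degree: "degree h < degree f + Suc k" and M: "\<And>i. \<bar>coeff h i\<bar> \<le> M"
  shows "\<exists>h'. degree h' < degree f + k \<and> f dvd h - h' \<and> (\<forall>i. \<bar>coeff h' i\<bar> \<le> M * (1 + B))"
proof -
  define d where "d = degree f"
  define c where "c = coeff h (d + k) * lead_coeff f"
  define h' where "h' = h - smult c (monom 1 k * f)"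
  have coeff_h': "coeff h' i = coeff h i - c * (if i < k then 0 else coeff f (i - k))" for i
    by (simp add: h'_def coeff_monom_mult)
  have "M \<ge> 0" and "B \<ge> 0"
    using M[of 0] B[of 0] by auto
  have "\<bar>c\<bar> \<le> M"
    using M[of "d + k"] lc by (simp add: c_def abs_mult)
  then have shift: "\<bar>c * (if i < k then 0 else coeff f (i - k))\<bar> \<le> M * B" for i
    using B[of "i - k"] \<open>M \<ge> 0\<close> \<open>B \<ge> 0\<close> by (auto simp: abs_mult intro: mult_mono)
  have bound: "\<bar>coeff h' i\<bar> \<le> M * (1 + B)" for i
  proof -
    have "\<bar>coeff h' i\<bar> \<le> \<bar>coeff h i\<bar> + \<bar>c * (if i < k then 0 else coeff f (i - k))\<bar>"
      unfolding coeff_h' by (rule abs_triangle_ineq4)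
    also have "\<dots> \<le> M + M * B"
      using M[of i] shift[of i] by (rule add_mono)
    finally show ?thesis
      by (simp add: algebra_simps)
  qed
  have "lead_coeff f * lead_coeff f = 1"
    using lc abs_mult_self_eq[of "lead_coeff f"] by simp
  then have "coeff h' i = 0" if "i \<ge> d + k" for i
  proof (cases "i = d + k")
    case True
    then show ?thesis
      using \<open>lead_coeff f * lead_coeff f = 1\<close> by (simp add: coeff_h' c_def d_def)
  next
    case False
    then have "coeff h i = 0" and "coeff f (i - k) = 0"
      using that degree by (auto simp: d_def intro: coeff_eq_0)
    then show ?thesis
      by (simp add: coeff_h')
  qed
  then have "degree h' \<le> d + k - 1"
    by (intro degree_le) auto
  then have "degree h' < degree f + k"
    using deg unfolding d_def by linarith
  moreover have "f dvd h - h'"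
    using dvd_smult[OF dvd_triv_right[of f "monom 1 k"], of c] by (simp add: h'_def)
  ultimately show ?thesis
    using bound by blast
qed

lemma bounded_remainder:
  fixes f :: "int poly"
  assumes lc: "\<bar>lead_coeff f\<bar> = 1" and deg: "degree f \<ge> 1" and B: "\<And>i. \<bar>coeff f i\<bar> \<le> B"
    and "degree h < degree f + k" and "\<And>i. \<bar>coeff h i\<bar> \<le> M"
  shows "\<exists>r. degree r < degree f \<and> f dvd h - r \<and> (\<forall>i. \<bar>coeff r i\<bar> \<le> M * (1 + B) ^ k)"
  using assms(4,5)
proof (induction k arbitrary: h M)
  case 0
  then show ?case
    by (intro exI[of _ h]) auto
next
  case (Suc k)
  obtain h' where h': "degree h' < degree f + k" "f dvd h - h'" "\<forall>i. \<bar>coeff h' i\<bar> \<le> M * (1 + B)"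
    using bounded_remainder_step[OF lc deg B Suc.prems] by blast
  obtain r where r: "degree r < degree f" "f dvd h' - r" "\<forall>i. \<bar>coeff r i\<bar> \<le> M * (1 + B) * (1 + B) ^ k"
    using Suc.IH[OF h'(1)] h'(3) by blast
  have "f dvd h - r"
    using dvd_add[OF h'(2) r(2)] by simp
  then show ?case
    using r(1,3) by (auto simp: mult_ac)
qed

lemma abs_coeff_sum_monom_le_card:
  fixes c :: "'b \<Rightarrow> 'a :: linordered_idom"
  assumes "\<And>x. x \<in> P \<Longrightarrow> \<bar>c x\<bar> \<le> 1"
  shows "\<bar>coeff (\<Sum>x\<in>P. monom (c x) (e x)) i\<bar> \<le> of_nat (card P)"
proof -
  have "\<bar>coeff (\<Sum>x\<in>P. monom (c x) (e x)) i\<bar> \<le> (\<Sum>x\<in>P. \<bar>coeff (monom (c x) (e x)) i\<bar>)"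
    unfolding coeff_sum by (rule sum_abs)
  also have "\<dots> \<le> (\<Sum>x\<in>P. 1)"
    by (rule sum_mono) (use assms in \<open>simp add: coeff_monom\<close>)
  finally show ?thesis
    by simp
qed

lemma ex_small_poly_ipoly_eq_zper:
  fixes X :: "nat \<Rightarrow> nat \<Rightarrow> int"
  assumes z: "z ^ m = 1" and m: "m > 0" and X: "\<forall>i<n. \<forall>j<n. X i j \<in> {0, 1}"
  shows "\<exists>h. ipoly h z = zper z n (\<lambda>i j. of_int (X i j)) \<and> degree h < m \<and> (\<forall>i. \<bar>coeff h i\<bar> \<le> fact n)"
proof -
  define P where "P = {\<sigma>. \<sigma> permutes {..<n}}"
  define summand where "summand \<sigma> = monom (\<Prod>i<n. X i (\<sigma> i)) (inv_num n \<sigma> mod m)" for \<sigma>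
  define h where "h = (\<Sum>\<sigma>\<in>P. summand \<sigma>)"
  have "ipoly h z = (\<Sum>\<sigma>\<in>P. z ^ inv_num n \<sigma> * (\<Prod>i<n. of_int (X i (\<sigma> i))))"
    using power_mod_eq_of_power_eq_1[OF z]
    by (simp add: h_def summand_def hom_distribs poly_sum poly_monom mult.commute)
  then have per: "ipoly h z = zper z n (\<lambda>i j. of_int (X i j))"
    by (simp add: zper_def P_def)
  have "degree (summand \<sigma>) \<le> m - 1" for \<sigma>
  proof -
    have "degree (summand \<sigma>) \<le> inv_num n \<sigma> mod m"
      unfolding summand_def by (rule degree_monom_le)
    moreover have "inv_num n \<sigma> mod m < m"
      using m by simp
    ultimately show ?thesis
      by linarith
  qed
  then have "degree h \<le> m - 1"
    unfolding h_def by (intro degree_sum_le) (simp_all add: P_def finite_permutations)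
  then have degree: "degree h < m"
    using m by linarith
  have entry: "\<bar>\<Prod>i<n. X i (\<sigma> i)\<bar> \<le> 1" if "\<sigma> \<in> P" for \<sigma>
  proof -
    have "\<sigma> i < n" if "i < n" for i
      using \<open>\<sigma> \<in> P\<close> that permutes_in_image[of \<sigma> "{..<n}" i] by (simp add: P_def)
    then have "\<bar>X i (\<sigma> i)\<bar> \<le> 1" if "i < n" for i
      using X that by fastforce
    then show ?thesis
      unfolding abs_prod by (intro prod_le_1) auto
  qed
  have "\<bar>coeff h i\<bar> \<le> of_nat (card P)" for i
    unfolding h_def summand_def using entry by (rule abs_coeff_sum_monom_le_card)
  moreover have "card P = fact n"
    by (simp add: P_def card_permutations)
  ultimately show ?thesis
    using per degree by auto
qed

lemma representation_coeff_bound: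
  fixes X :: "nat \<Rightarrow> nat \<Rightarrow> int" and a :: "nat \<Rightarrow> int"
  assumes m: "m \<ge> 2" and X: "\<forall>i<n. \<forall>j<n. X i j \<in> {0, 1}" and z: "primitive_root_unity m z"
    and rep: "(\<Sum>i<totient m. of_int (a i) * z ^ i) = zper z n (\<lambda>i j. of_int (X i j))"
    and "i < totient m"
  shows "\<bar>a i\<bar> \<le> fact n * (1 + 4 ^ m) ^ m"
proof -
  have m0: "m > 0"
    using m by simp
  have zm: "z ^ m = 1"
    using z by (simp add: primitive_root_unity_def)
  obtain f where f: "is_int_minpoly z f"
    using int_minpoly_exists[OF root_unity_poly_nonzero[OF m0], of z] zm by auto
  have dvd: "f dvd root_unity_poly m"
    using int_minpoly_dvd[OF f] zm by simp
  obtain h where h: "ipoly h z = zper z n (\<lambda>i j. of_int (X i j))" "degree h < degree f + m"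
    "\<forall>i. \<bar>coeff h i\<bar> \<le> fact n"
    using ex_small_poly_ipoly_eq_zper[OF zm m0 X] by fastforce
  have "\<exists>r. degree r < degree f \<and> f dvd h - r \<and> (\<forall>i. \<bar>coeff r i\<bar> \<le> fact n * (1 + 4 ^ m) ^ m)"
    by (rule bounded_remainder[OF dvd_root_unity_poly_lead_coeff[OF dvd m0]
          int_minpoly_degree_pos[OF f] dvd_root_unity_poly_coeff_bound[OF dvd m0] h(2)])
      (use h(3) in blast)
  then obtain r where r: "degree r < degree f" "f dvd h - r"
    "\<forall>i. \<bar>coeff r i\<bar> \<le> fact n * (1 + 4 ^ m) ^ m"
    by blast
  have "ipoly r z = (\<Sum>i<totient m. of_int (a i) * z ^ i)"
    using int_minpoly_ipoly_eq_if_dvd_diff[OF f r(2)] h(1) rep by simp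
  moreover have "totient m \<le> degree f"
    using int_minpoly_primitive_root_degree[OF z _ f] m by simp
  ultimately have "coeff r i = a i"
    using int_minpoly_coeff_eq_representation[OF f _ r(1)] \<open>i < totient m\<close> by blast
  then show ?thesis
    using r(3) by metis
qed

lemma ln_abs_le_if_abs_le_fact_mult_power:
  fixes a :: int
  assumes m: "m \<ge> 2" and n: "n \<ge> 2" and "a \<noteq> 0" and a: "\<bar>a\<bar> \<le> fact n * (1 + 4 ^ m) ^ m"
  shows "ln \<bar>real_of_int a\<bar> \<le> 3 * (real m ^ 2 * ln (real m) + real n * ln (real n))"
proof -
  have "(1 + 4 ^ m :: real) \<le> 2 * 4 ^ m"
    by simp
  also have "\<dots> = 2 ^ (2 * m + 1)"
    by (simp add: power_mult)
  also have "\<dots> \<le> 2 ^ (3 * m)"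
    using m by (intro power_increasing) auto
  finally have "(1 + 4 ^ m :: real) ^ m \<le> (2 ^ (3 * m)) ^ m"
    by (intro power_mono) auto
  also have "\<dots> = 2 ^ (3 * m * m)"
    by (simp add: power_mult)
  finally have power: "(1 + 4 ^ m :: real) ^ m \<le> 2 ^ (3 * m * m)" .
  have "real_of_int \<bar>a\<bar> \<le> real_of_int (fact n * (1 + 4 ^ m) ^ m)"
    using a by (simp only: of_int_le_iff)
  then have "\<bar>real_of_int a\<bar> \<le> fact n * (1 + 4 ^ m) ^ m"
    by simp
  also have "\<dots> \<le> real n ^ n * 2 ^ (3 * m * m)"
    using fact_le_power[where 'a = real, of n] power by (intro mult_mono) auto
  finally have "ln \<bar>real_of_int a\<bar> \<le> ln (real n ^ n * 2 ^ (3 * m * m))"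
    using \<open>a \<noteq> 0\<close> n by (subst ln_le_cancel_iff) auto
  also have "\<dots> = real n * ln (real n) + real (3 * m * m) * ln 2"
    using n by (simp add: ln_mult_pos ln_realpow)
  also have "\<dots> \<le> real n * ln (real n) + real (3 * m * m) * ln (real m)"
    using m by (intro add_left_mono mult_left_mono) auto
  also have "real n * ln (real n) + real (3 * m * m) * ln (real m)
      = 3 * (real m ^ 2 * ln (real m)) + real n * ln (real n)"
    by (simp add: power2_eq_square)
  finally have "ln \<bar>real_of_int a\<bar> \<le> 3 * (real m ^ 2 * ln (real m)) + real n * ln (real n)" .
  moreover have "0 \<le> real n * ln (real n)"
    using n by simp
  ultimately show ?thesis
    unfolding distrib_left by linarith
qed

theorem mainTheorem7:
  shows "\<exists>C::real. \<forall>(m::nat) (n::nat) (X::nat \<Rightarrow> nat \<Rightarrow> int) (\<zeta>::complex) (a::nat \<Rightarrow> int).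
    m \<ge> 2 \<longrightarrow> n \<ge> 2 \<longrightarrow>
    (\<forall>i<n. \<forall>j<n. X i j \<in> {0, 1}) \<longrightarrow>
    primitive_root_unity m \<zeta> \<longrightarrow>
    (\<Sum>i<totient m. of_int (a i) * \<zeta> ^ i) = zper \<zeta> n (\<lambda>i j. of_int (X i j)) \<longrightarrow>
    (\<forall>i<totient m. a i \<noteq> 0 \<longrightarrow>
       ln \<bar>real_of_int (a i)\<bar> \<le> C * (real m ^ 2 * ln (real m) + real n * ln (real n)))"
proof (intro exI[of _ 3] allI impI)
  fix m n :: nat and X :: "nat \<Rightarrow> nat \<Rightarrow> int" and z :: complex and a :: "nat \<Rightarrow> int" and i :: nat
  assume m: "m \<ge> 2" and n: "n \<ge> 2" and X: "\<forall>i<n. \<forall>j<n. X i j \<in> {0, 1}"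
    and z: "primitive_root_unity m z"
    and rep: "(\<Sum>i<totient m. of_int (a i) * z ^ i) = zper z n (\<lambda>i j. of_int (X i j))"
    and i: "i < totient m" and "a i \<noteq> 0"
  show "ln \<bar>real_of_int (a i)\<bar> \<le> 3 * (real m ^ 2 * ln (real m) + real n * ln (real n))"
    using ln_abs_le_if_abs_le_fact_mult_power[OF m n \<open>a i \<noteq> 0\<close> representation_coeff_bound[OF m X z rep i]] .
qed

end
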